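(* Let $\Omega\subset\mathbb R^n$ be a bounded convex domain and $p>0$. (i) Suppose $u,v\in C^2(\Omega)\cap C(\overline{\Omega})$ are convex functions with $\det D^2 u\geq |u|^{-p}$ and $\det D^2 v\leq |v|^{-p}$ in $\Omega$, and $0\geq v\geq u$ on $\partial\Omega$. Then $v\geq u$ in $\Omega$. (ii) Let $k>0$. Suppose $u,v\in C^2(\Omega)\cap C(\overline{\Omega})$ are convex functions with $x\cdot Du-u>0$ and $x\cdot Dv-v>0$ in $\Omega$, $0\geq v\geq u$ on $\partial\Omega$, and $$\det D^2 u\geq |u|^{-p}(x\cdot Du-u)^{-k},\qquad \det D^2 v\leq |v|^{-p}(x\cdot Dv-v)^{-k}\quad\text{in }\Omega.$$ Then $v\geq u$ in $\Omega$. *)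

theory Defs
  imports "HOL-Analysis.Analysis" "HOL-Library.Extended_Real"
begin

definition C2_with :: "(real^'n) set \<Rightarrow> (real^'n \<Rightarrow> real) \<Rightarrow> (real^'n \<Rightarrow> real^'n)
    \<Rightarrow> (real^'n \<Rightarrow> real^'n^'n) \<Rightarrow> bool" where
  "C2_with S u Du Hu \<longleftrightarrow>
     (\<forall>x\<in>S. (u has_derivative (\<lambda>h. Du x \<bullet> h)) (at x)
           \<and> (Du has_derivative (\<lambda>h. Hu x *v h)) (at x))
     \<and> continuous_on S Hu"

definition negpow :: "real \<Rightarrow> real \<Rightarrow> ereal" where
  "negpow t p = (if t = 0 then \<infinity> else ereal (\<bar>t\<bar> powr (- p)))"

end

theory Submission
  imports Defs
begin

text \<open>If \<open>u > v\<close> somewhere, then \<open>u - v\<close> attains a positive maximum at an interior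
  point \<open>y\<close>, because \<open>u \<le> v\<close> on the boundary. There \<open>Du = Dv\<close> and \<open>D\<^sup>2u \<le> D\<^sup>2v\<close>,
  while \<open>D\<^sup>2u \<ge> 0\<close> by convexity; since the determinant is monotone on positive
  semidefinite symmetric matrices, \<open>det D\<^sup>2u(y) \<le> det D\<^sup>2v(y)\<close>. The same maximum
  argument applied to \<open>u\<close> and \<open>0\<close> shows \<open>u \<le> 0\<close> in \<open>\<Omega>\<close>. Hence \<open>v(y) < u(y) \<le> 0\<close>,
  so \<open>\<bar>v\<bar> powr -p < \<bar>u\<bar> powr -p\<close>, and in case (ii) also \<open>x \<bullet> Dv - v > x \<bullet> Du - u\<close>
  at \<open>y\<close>; the two differential inequalities then force \<open>det D\<^sup>2v(y) < det D\<^sup>2u(y)\<close>.\<close>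

section \<open>Monotonicity of the determinant in the Loewner order\<close>

lemma transpose_eq_self_entry:
  fixes A :: "'a^'n^'n"
  assumes "transpose A = A"
  shows "A$i$j = A$j$i"
  by (metis assms transpose_def vec_lambda_beta)

text \<open>The determinant of \<open>principal_block S A\<close> is the principal minor of \<open>A\<close> on the
  index set \<open>S\<close>.\<close>
definition principal_block :: "'n set \<Rightarrow> real^'n^'n \<Rightarrow> real^'n^'n" where
  "principal_block S A = (\<chi> i j. if i \<in> S \<and> j \<in> S then A$i$j else if i = j then 1 else 0)"

definition schur_complement :: "'n \<Rightarrow> real^'n^'n \<Rightarrow> real^'n^'n" where
  "schur_complement k A = (\<chi> i j. A$i$j - A$i$k * A$k$j / A$k$k)"

definition psd_on :: "'n set \<Rightarrow> real^'n^'n \<Rightarrow> bool" where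
  "psd_on S A \<longleftrightarrow> (\<forall>x. (\<forall>i. i \<notin> S \<longrightarrow> x$i = 0) \<longrightarrow> 0 \<le> x \<bullet> (A *v x))"

definition loewner_le_on :: "'n set \<Rightarrow> real^'n^'n \<Rightarrow> real^'n^'n \<Rightarrow> bool" where
  "loewner_le_on S A B \<longleftrightarrow> (\<forall>x. (\<forall>i. i \<notin> S \<longrightarrow> x$i = 0) \<longrightarrow> x \<bullet> (A *v x) \<le> x \<bullet> (B *v x))"

lemma principal_block_empty: "principal_block {} A = mat 1"
  by (simp add: principal_block_def mat_def vec_eq_iff)

lemma principal_block_UNIV: "principal_block UNIV A = A"
  by (simp add: principal_block_def vec_eq_iff)

lemma transpose_schur_complement:
  assumes "transpose A = A"
  shows "transpose (schur_complement k A) = schur_complement k A"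
proof -
  have "A$i$j = A$j$i" for i j
    using assms by (rule transpose_eq_self_entry)
  then show ?thesis
    unfolding vec_eq_iff transpose_def schur_complement_def vec_lambda_beta
    by (intro allI) (metis mult.commute)
qed

lemma det_column_elimination_matrix:
  fixes c :: "'n::finite \<Rightarrow> real"
  assumes "k \<notin> S"
  shows "det (\<chi> i j. if i = j then 1 else if j = k \<and> i \<in> S then c i else (0::real)) = 1"
proof -
  let ?E = "\<chi> i j. if i = j then 1 else if j = k \<and> i \<in> S then c i else (0::real)"
  define x where "x = (\<chi> j. if j \<in> S then c j else (0::real))"
  have E: "transpose ?E = (\<chi> i. if i = k then row k (mat 1) + x else row i (mat 1))"
    using assms by (auto simp: vec_eq_iff transpose_def row_def mat_def x_def)
  have "x = (\<Sum>j\<in>S. c j *s row j (mat 1))"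
    by (auto simp: vec_eq_iff x_def row_def mat_def sum_component if_distrib cong: if_cong)
  also have "\<dots> \<in> vec.span {row j (mat 1 :: real^'n^'n) |j. j \<noteq> k}"
    using assms by (blast intro: vec.span_sum vec.span_scale vec.span_base)
  finally have "det (transpose ?E) = det (mat 1 :: real^'n^'n)"
    unfolding E by (rule det_row_span)
  then show ?thesis by simp
qed

text \<open>Gaussian elimination of the pivot \<open>k\<close>.\<close>
lemma det_principal_block_insert:
  assumes kS: "k \<notin> S" and pivot: "A$k$k \<noteq> 0"
  shows "det (principal_block (insert k S) A) = A$k$k * det (principal_block S (schur_complement k A))"
proof -
  define a where "a = A$k$k"
  define R where "R = principal_block (insert k S) A"
  define N where "N = principal_block S (schur_complement k A)"
  define E where "E = (\<chi> i j. if i = j then 1 else if j = k \<and> i \<in> S then - A$i$k / a else (0::real))"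
  define r where "r = (\<chi> j. if j \<in> S then A$k$j else (0::real))"
  have ER_entry: "(E ** R)$i$j = R$i$j + (if i \<in> S then - A$i$k / a * R$k$j else 0)" for i j
  proof (cases "i \<in> S")
    case True
    then have "i \<noteq> k" using kS by auto
    then have "(E ** R)$i$j = (\<Sum>l\<in>UNIV. (if l = i then R$i$j else 0)
                                  + (if l = k then - A$i$k / a * R$k$j else 0))"
      unfolding matrix_matrix_mult_def E_def using True by (auto intro!: sum.cong)
    then show ?thesis using True by (simp add: sum.distrib)
  next
    case False
    have "(E ** R)$i$j = (\<Sum>l\<in>UNIV. if l = i then R$i$j else 0)"
      unfolding matrix_matrix_mult_def E_def vec_lambda_beta
      by (rule sum.cong) (use False in auto)
    then show ?thesis using False by simp
  qed
  have "(E ** R)$i$j = (if i = k then a *s axis k 1 + r else row i N)$j" for i j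
    using kS pivot unfolding ER_entry
    by (auto simp: R_def N_def principal_block_def schur_complement_def r_def row_def axis_def a_def)
  then have ER: "E ** R = (\<chi> i. if i = k then a *s axis k 1 + r else row i N)"
    by (simp add: vec_eq_iff)
  have "det E = 1"
    unfolding E_def by (rule det_column_elimination_matrix[OF kS])
  then have "det R = det (E ** R)"
    by (simp add: det_mul)
  also have "\<dots> = det (\<chi> i. if i = k then a *s axis k 1 else row i N) +
                   det (\<chi> i. if i = k then r else row i N)"
    unfolding ER by (rule det_row_add)
  also have "det (\<chi> i. if i = k then a *s axis k 1 else row i N) =
             a * det (\<chi> i. if i = k then axis k 1 else row i N)"
    by (rule det_row_mul)
  also have "(\<chi> i. if i = k then axis k 1 else row i N) = N"
    using kS by (auto simp: vec_eq_iff N_def principal_block_def row_def axis_def)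
  also have "det (\<chi> i. if i = k then r else row i N) = 0"
  proof (rule det_zero_column(1))
    show "column k (\<chi> i. if i = k then r else row i N) = 0"
      using kS by (auto simp: vec_eq_iff column_def N_def principal_block_def row_def r_def)
  qed
  finally show ?thesis by (simp add: R_def N_def a_def)
qed

lemma quad_form_axis: "axis k 1 \<bullet> (A *v axis k 1) = A$k$k"
  by (simp add: inner_axis' matrix_vector_mult_basis column_def)

lemma quad_form_add_axis:
  fixes A :: "real^'n^'n"
  assumes sym: "transpose A = A" and pivot: "A$k$k \<noteq> 0"
  shows "(y + t *\<^sub>R axis k 1) \<bullet> (A *v (y + t *\<^sub>R axis k 1)) =
         y \<bullet> (schur_complement k A *v y) + (A$k$k * t + (A *v y)$k)\<^sup>2 / A$k$k"
proof -
  let ?\<beta> = "(A *v y)$k"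
  have col: "(\<Sum>i\<in>UNIV. y$i * A$i$k) = ?\<beta>"
    by (simp add: matrix_vector_mult_def transpose_eq_self_entry[OF sym, of _ k] mult.commute)
  have quad: "x \<bullet> (M *v x) = (\<Sum>i\<in>UNIV. \<Sum>j\<in>UNIV. x$i * M$i$j * x$j)"
    for x :: "real^'n" and M :: "real^'n^'n"
    by (simp add: inner_vec_def matrix_vector_mult_def sum_distrib_left mult.assoc)
  have "y \<bullet> (schur_complement k A *v y) = y \<bullet> (A *v y)
      - (\<Sum>i\<in>UNIV. \<Sum>j\<in>UNIV. (y$i * A$i$k) * (A$k$j * y$j)) / A$k$k"
    by (simp add: quad schur_complement_def sum_subtractf sum_divide_distrib algebra_simps)
  also have "\<dots> = y \<bullet> (A *v y) - (\<Sum>i\<in>UNIV. y$i * A$i$k) * (\<Sum>j\<in>UNIV. A$k$j * y$j) / A$k$k"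
    by (simp add: sum_product)
  also have "\<dots> = y \<bullet> (A *v y) - ?\<beta>\<^sup>2 / A$k$k"
    by (simp add: col power2_eq_square matrix_vector_mult_def)
  finally have schur: "y \<bullet> (schur_complement k A *v y) = y \<bullet> (A *v y) - ?\<beta>\<^sup>2 / A$k$k" .
  have "y \<bullet> (A *v axis k 1) = ?\<beta>"
    using col by (simp add: inner_vec_def matrix_vector_mult_basis column_def)
  moreover have "axis k 1 \<bullet> (A *v y) = ?\<beta>"
    by (simp add: inner_axis')
  moreover have "(y + t *\<^sub>R axis k 1) \<bullet> (A *v (y + t *\<^sub>R axis k 1)) =
     y \<bullet> (A *v y) + t * (y \<bullet> (A *v axis k 1)) + t * (axis k 1 \<bullet> (A *v y))
      + t * t * (axis k 1 \<bullet> (A *v axis k 1))"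
    by (simp add: matrix_vector_right_distrib matrix_vector_mult_scaleR inner_add_left
      inner_add_right algebra_simps)
  ultimately have "(y + t *\<^sub>R axis k 1) \<bullet> (A *v (y + t *\<^sub>R axis k 1)) =
      y \<bullet> (A *v y) + 2 * t * ?\<beta> + t\<^sup>2 * A$k$k"
    by (simp add: quad_form_axis power2_eq_square)
  moreover have "(A$k$k * t + ?\<beta>)\<^sup>2 / A$k$k = 2 * t * ?\<beta> + t\<^sup>2 * A$k$k + ?\<beta>\<^sup>2 / A$k$k"
    using pivot by (simp add: add_divide_distrib power2_eq_square algebra_simps)
  ultimately show ?thesis
    using schur by linarith
qed

lemma psd_on_diag_nonneg:
  assumes "psd_on (insert k S) M"
  shows "0 \<le> M$k$k"
proof -
  have "\<forall>i. i \<notin> insert k S \<longrightarrow> axis k 1 $ i = (0::real)"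
    by (simp add: axis_def)
  then show ?thesis
    using assms quad_form_axis[of k M] unfolding psd_on_def by metis
qed

lemma det_principal_block_zero_pivot:
  assumes kS: "k \<notin> S" and sym: "transpose M = M" and psd: "psd_on (insert k S) M"
    and pivot: "M$k$k = 0"
  shows "det (principal_block (insert k S) M) = 0"
proof -
  have "M$k$j = 0" if "j \<in> S" for j
  proof (rule ccontr)
    assume Mkj: "M$k$j \<noteq> 0"
    define t where "t = - (M$j$j + 1) / (2 * M$k$j)"
    have "\<forall>i. i \<notin> insert k S \<longrightarrow> (axis j 1 + t *\<^sub>R axis k 1) $ i = 0"
      using that by (auto simp: axis_def)
    then have "0 \<le> (axis j 1 + t *\<^sub>R axis k 1) \<bullet> (M *v (axis j 1 + t *\<^sub>R axis k 1))"
      using psd unfolding psd_on_def by blast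
    also have "\<dots> = M$j$j + 2 * t * M$k$j"
      using pivot transpose_eq_self_entry[OF sym, of j k]
      by (simp add: matrix_vector_right_distrib matrix_vector_mult_scaleR inner_add_left
        inner_add_right quad_form_axis inner_axis inner_axis' matrix_vector_mult_basis column_def)
    also have "\<dots> = -1"
      using Mkj by (simp add: t_def field_simps)
    finally show False by simp
  qed
  then have "row k (principal_block (insert k S) M) = 0"
    using pivot kS by (auto simp: row_def principal_block_def vec_eq_iff)
  then show ?thesis by (rule det_zero_row(1))
qed

lemma quad_form_schur_complement_le:
  fixes A :: "real^'n^'n"
  assumes "transpose A = A" and "A$k$k > 0"
  shows "y \<bullet> (schur_complement k A *v y) \<le> (y + t *\<^sub>R axis k 1) \<bullet> (A *v (y + t *\<^sub>R axis k 1))"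
  using quad_form_add_axis[OF assms(1), of k y t] assms(2) by simp

lemma quad_form_schur_complement_attained:
  fixes A :: "real^'n^'n"
  assumes "transpose A = A" and "A$k$k \<noteq> 0"
  obtains t where "y \<bullet> (schur_complement k A *v y) = (y + t *\<^sub>R axis k 1) \<bullet> (A *v (y + t *\<^sub>R axis k 1))"
proof
  show "y \<bullet> (schur_complement k A *v y) =
    (y + (- (A *v y)$k / A$k$k) *\<^sub>R axis k 1) \<bullet> (A *v (y + (- (A *v y)$k / A$k$k) *\<^sub>R axis k 1))"
    using quad_form_add_axis[OF assms, of y "- (A *v y)$k / A$k$k"] assms(2) by simp
qed

lemma psd_on_schur_complement:
  fixes M :: "real^'n^'n"
  assumes sym: "transpose M = M" and psd: "psd_on (insert k S) M" and pivot: "M$k$k > 0"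
  shows "psd_on S (schur_complement k M)"
  unfolding psd_on_def
proof (intro allI impI)
  fix y :: "real^'n"
  obtain t where t: "y \<bullet> (schur_complement k M *v y) = (y + t *\<^sub>R axis k 1) \<bullet> (M *v (y + t *\<^sub>R axis k 1))"
    using quad_form_schur_complement_attained[OF sym] pivot by (metis less_irrefl)
  assume "\<forall>i. i \<notin> S \<longrightarrow> y$i = 0"
  then have "\<forall>i. i \<notin> insert k S \<longrightarrow> (y + t *\<^sub>R axis k 1) $ i = 0"
    by (auto simp: axis_def)
  then have "0 \<le> (y + t *\<^sub>R axis k 1) \<bullet> (M *v (y + t *\<^sub>R axis k 1))"
    using psd unfolding psd_on_def by blast
  then show "0 \<le> y \<bullet> (schur_complement k M *v y)"
    by (simp only: t)
qed

lemma loewner_le_on_schur_complement: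
  fixes A B :: "real^'n^'n"
  assumes symA: "transpose A = A" and symB: "transpose B = B"
    and le: "loewner_le_on (insert k S) A B" and A: "A$k$k > 0" and B: "B$k$k > 0"
  shows "loewner_le_on S (schur_complement k A) (schur_complement k B)"
  unfolding loewner_le_on_def
proof (intro allI impI)
  fix y :: "real^'n"
  obtain t where t: "y \<bullet> (schur_complement k B *v y) = (y + t *\<^sub>R axis k 1) \<bullet> (B *v (y + t *\<^sub>R axis k 1))"
    using quad_form_schur_complement_attained[OF symB] B by (metis less_irrefl)
  assume "\<forall>i. i \<notin> S \<longrightarrow> y$i = 0"
  then have "\<forall>i. i \<notin> insert k S \<longrightarrow> (y + t *\<^sub>R axis k 1) $ i = 0"
    by (auto simp: axis_def)
  then have "(y + t *\<^sub>R axis k 1) \<bullet> (A *v (y + t *\<^sub>R axis k 1))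
      \<le> (y + t *\<^sub>R axis k 1) \<bullet> (B *v (y + t *\<^sub>R axis k 1))"
    using le unfolding loewner_le_on_def by blast
  then have "(y + t *\<^sub>R axis k 1) \<bullet> (A *v (y + t *\<^sub>R axis k 1))
      \<le> y \<bullet> (schur_complement k B *v y)"
    by (simp only: t)
  then show "y \<bullet> (schur_complement k A *v y) \<le> y \<bullet> (schur_complement k B *v y)"
    using quad_form_schur_complement_le[OF symA A] by (rule order_trans[rotated])
qed

lemma det_principal_block_nonneg:
  assumes "finite S" and "transpose M = M" and "psd_on S M"
  shows "0 \<le> det (principal_block S M)"
  using assms
proof (induction S arbitrary: M rule: finite_induct)
  case empty
  then show ?case by (simp add: principal_block_empty)
next
  case (insert k S)
  show ?case
  proof (cases "M$k$k = 0")
    case True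
    then show ?thesis
      using det_principal_block_zero_pivot[OF insert.hyps(2) insert.prems] by simp
  next
    case False
    then have "M$k$k > 0"
      using psd_on_diag_nonneg[OF insert.prems(2)] by simp
    moreover have "0 \<le> det (principal_block S (schur_complement k M))"
      using insert.IH transpose_schur_complement psd_on_schur_complement insert.prems \<open>M$k$k > 0\<close>
      by blast
    ultimately show ?thesis
      using det_principal_block_insert[OF insert.hyps(2) False] by simp
  qed
qed

text \<open>Eliminating one index by a Schur complement scales the principal minor by the pivot
  and preserves both positive semidefiniteness and the Loewner order.\<close>
lemma det_principal_block_mono:
  assumes "finite S" and "transpose A = A" and "transpose B = B"
    and "psd_on S A" and "loewner_le_on S A B"
  shows "det (principal_block S A) \<le> det (principal_block S B)"
  using assms
proof (induction S arbitrary: A B rule: finite_induct)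
  case empty
  then show ?case by (simp add: principal_block_empty)
next
  case (insert k S)
  note kS = insert.hyps(2) and symA = insert.prems(1) and symB = insert.prems(2)
    and psdA = insert.prems(3) and le = insert.prems(4)
  have psdB: "psd_on (insert k S) B"
    using psdA le unfolding psd_on_def loewner_le_on_def by (meson order_trans)
  have "A$k$k \<le> B$k$k"
  proof -
    have "\<forall>i. i \<notin> insert k S \<longrightarrow> axis k 1 $ i = (0::real)"
      by (simp add: axis_def)
    then show ?thesis
      using le quad_form_axis[of k A] quad_form_axis[of k B] unfolding loewner_le_on_def by metis
  qed
  show ?case
  proof (cases "A$k$k = 0")
    case True
    then show ?thesis
      using det_principal_block_zero_pivot[OF kS symA psdA]
        det_principal_block_nonneg[OF finite_insert[THEN iffD2, OF insert.hyps(1)] symB psdB]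
      by simp
  next
    case False
    then have A: "A$k$k > 0" using psd_on_diag_nonneg[OF psdA] by simp
    with \<open>A$k$k \<le> B$k$k\<close> have B: "B$k$k > 0" by simp
    have "0 \<le> det (principal_block S (schur_complement k A))"
      using det_principal_block_nonneg insert.hyps(1) transpose_schur_complement[OF symA]
        psd_on_schur_complement[OF symA psdA A] by blast
    moreover have "det (principal_block S (schur_complement k A))
        \<le> det (principal_block S (schur_complement k B))"
      using insert.IH transpose_schur_complement symA symB psd_on_schur_complement[OF symA psdA A]
        loewner_le_on_schur_complement[OF symA symB le A B] by blast
    ultimately show ?thesis
      using det_principal_block_insert[OF kS] A B \<open>A$k$k \<le> B$k$k\<close>
      by (simp add: mult_mono)
  qed
qed

lemma det_mono_loewner:
  fixes A B :: "real^'n^'n"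
  assumes "transpose A = A" and "transpose B = B"
    and "\<And>x. 0 \<le> x \<bullet> (A *v x)" and "\<And>x. x \<bullet> (A *v x) \<le> x \<bullet> (B *v x)"
  shows "det A \<le> det B"
  using det_principal_block_mono[of UNIV A B] assms
  by (simp add: principal_block_UNIV psd_on_def loewner_le_on_def)

section \<open>Second derivatives along lines\<close>

lemma has_real_derivative_along_line:
  fixes F :: "'a::real_normed_vector \<Rightarrow> real"
  assumes "(F has_derivative F') (at (x + t *\<^sub>R h))"
  shows "((\<lambda>s. F (x + s *\<^sub>R h)) has_real_derivative F' h) (at t)"
proof -
  have "((\<lambda>s. x + s *\<^sub>R h) has_derivative (\<lambda>s. s *\<^sub>R h)) (at t)"
    by (auto intro!: derivative_eq_intros)
  from has_derivative_compose[OF this assms]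
  have "((\<lambda>s. F (x + s *\<^sub>R h)) has_derivative (\<lambda>s. F' (s *\<^sub>R h))) (at t)"
    by (simp add: o_def)
  moreover have "(\<lambda>s. F' (s *\<^sub>R h)) = (*) (F' h)"
    using linear.scaleR[OF has_derivative_linear[OF assms]] by (auto simp: fun_eq_iff mult.commute)
  ultimately show ?thesis by (simp add: has_field_derivative_def)
qed

text \<open>Mean value theorem on both sides of \<open>0\<close>, where \<open>g'\<close> changes sign.\<close>
lemma deriv2_pos_imp_both_sides_greater:
  fixes g g' :: "real \<Rightarrow> real"
  assumes r: "r > 0" and g: "\<And>t. \<bar>t\<bar> < r \<Longrightarrow> (g has_real_derivative g' t) (at t)"
    and g': "(g' has_real_derivative c) (at 0)" and "g' 0 = 0" and "c > 0"
  obtains t where "0 < t" "t < r" "g 0 < g t" "g 0 < g (- t)"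
proof -
  obtain d1 where d1: "d1 > 0" "\<And>h. 0 < h \<Longrightarrow> h < d1 \<Longrightarrow> g' 0 < g' h"
    using DERIV_pos_inc_right[OF g' \<open>c > 0\<close>] by auto
  obtain d2 where d2: "d2 > 0" "\<And>h. 0 < h \<Longrightarrow> h < d2 \<Longrightarrow> g' (- h) < g' 0"
    using DERIV_pos_inc_left[OF g' \<open>c > 0\<close>] by auto
  define t where "t = min r (min d1 d2) / 2"
  have t: "0 < t" "t < r" "t < d1" "t < d2"
    using r d1 d2 by (auto simp: t_def)
  obtain z1 where z1: "0 < z1" "z1 < t" "g t - g 0 = (t - 0) * g' z1"
    using MVT2[of 0 t g g'] t g by auto
  obtain z2 where z2: "- t < z2" "z2 < 0" "g 0 - g (- t) = (0 - (- t)) * g' z2"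
    using MVT2[of "- t" 0 g g'] t g by auto
  have "g' z1 > 0" "g' z2 < 0"
    using d1(2)[of z1] d2(2)[of "- z2"] z1 z2 t \<open>g' 0 = 0\<close> by auto
  then have "t * g' z1 > 0" "t * g' z2 < 0"
    using t by (simp_all add: mult_pos_neg)
  with t z1 z2 show ?thesis
    by (intro that[of t]) auto
qed

lemma derivatives_along_line:
  fixes u :: "'a::real_inner \<Rightarrow> real"
  assumes "open S" and "x \<in> S" and du: "\<forall>y\<in>S. (u has_derivative (\<lambda>v. Du y \<bullet> v)) (at y)"
    and D2: "(Du has_derivative D2) (at x)"
  obtains r where "r > 0" and "\<And>t. \<bar>t\<bar> < r \<Longrightarrow> x + t *\<^sub>R h \<in> S"
    and "\<And>t. \<bar>t\<bar> < r \<Longrightarrow> ((\<lambda>s. u (x + s *\<^sub>R h)) has_real_derivative Du (x + t *\<^sub>R h) \<bullet> h) (at t)"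
    and "((\<lambda>s. Du (x + s *\<^sub>R h) \<bullet> h) has_real_derivative D2 h \<bullet> h) (at 0)"
proof -
  obtain e where e: "e > 0" "ball x e \<subseteq> S"
    using assms(1,2) open_contains_ball by blast
  define r where "r = e / (norm h + 1)"
  have nh: "norm h + 1 > 0" by (simp add: add_nonneg_pos)
  have inS: "x + t *\<^sub>R h \<in> S" if "\<bar>t\<bar> < r" for t
  proof -
    have "\<bar>t\<bar> * norm h \<le> \<bar>t\<bar> * (norm h + 1)" by (simp add: mult_left_mono)
    also have "\<dots> < e"
      using that nh by (simp add: r_def pos_less_divide_eq)
    finally show ?thesis
      using e by (auto simp: dist_norm)
  qed
  show ?thesis
  proof (rule that)
    show "r > 0" using e nh by (simp add: r_def)
    show "((\<lambda>s. u (x + s *\<^sub>R h)) has_real_derivative Du (x + t *\<^sub>R h) \<bullet> h) (at t)"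
      if "\<bar>t\<bar> < r" for t
      using has_real_derivative_along_line du inS[OF that] by blast
    show "((\<lambda>s. Du (x + s *\<^sub>R h) \<bullet> h) has_real_derivative D2 h \<bullet> h) (at 0)"
      using has_real_derivative_along_line[of "\<lambda>y. Du y \<bullet> h" "\<lambda>v. D2 v \<bullet> h" x 0 h]
        has_derivative_inner_left[OF D2, of h] by simp
  qed (fact inS)
qed

lemma convex_on_second_derivative_nonneg:
  fixes u :: "'a::real_inner \<Rightarrow> real"
  assumes "open S" and "x \<in> S" and cvx: "convex_on S u"
    and du: "\<forall>y\<in>S. (u has_derivative (\<lambda>v. Du y \<bullet> v)) (at y)"
    and D2: "(Du has_derivative D2) (at x)"
  shows "0 \<le> D2 h \<bullet> h"
proof (rule ccontr)
  assume neg: "\<not> 0 \<le> D2 h \<bullet> h"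
  obtain r where "r > 0" and inS: "\<And>t. \<bar>t\<bar> < r \<Longrightarrow> x + t *\<^sub>R h \<in> S"
    and d1: "\<And>t. \<bar>t\<bar> < r \<Longrightarrow> ((\<lambda>s. u (x + s *\<^sub>R h)) has_real_derivative Du (x + t *\<^sub>R h) \<bullet> h) (at t)"
    and d2: "((\<lambda>s. Du (x + s *\<^sub>R h) \<bullet> h) has_real_derivative D2 h \<bullet> h) (at 0)"
    using derivatives_along_line[OF assms(1,2) du D2] by blast
  \<comment> \<open>Then \<open>u\<close> lies strictly below its tangent at \<open>x + t h\<close> and \<open>x - t h\<close>, for some small
    \<open>t\<close>, contradicting convexity at their midpoint \<open>x\<close>.\<close>
  define g where "g s = u x + (Du x \<bullet> h) * s - u (x + s *\<^sub>R h)" for s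
  define g' where "g' s = Du x \<bullet> h - Du (x + s *\<^sub>R h) \<bullet> h" for s
  have g: "(g has_real_derivative g' t) (at t)" if "\<bar>t\<bar> < r" for t
    unfolding g_def g'_def using d1[OF that] by (auto intro!: derivative_eq_intros)
  have g': "(g' has_real_derivative - (D2 h \<bullet> h)) (at 0)"
    unfolding g'_def using d2 by (auto intro!: derivative_eq_intros)
  obtain t where t: "0 < t" "t < r" "g 0 < g t" "g 0 < g (- t)"
    using deriv2_pos_imp_both_sides_greater[OF \<open>r > 0\<close> g g'] neg by (auto simp: g'_def)
  have "(1 - 1/2) *\<^sub>R (x + t *\<^sub>R h) + (1/2) *\<^sub>R (x + (- t) *\<^sub>R h)
      = ((1 - 1/2) + 1/2) *\<^sub>R x + ((1 - 1/2) * t + (1/2) * (- t)) *\<^sub>R h"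
    by (simp only: scaleR_add_right scaleR_add_left scaleR_scaleR) (simp only: add_ac)
  then have "x = (1 - 1/2) *\<^sub>R (x + t *\<^sub>R h) + (1/2) *\<^sub>R (x + (- t) *\<^sub>R h)"
    by simp
  then have "u x \<le> (1 - 1/2) * u (x + t *\<^sub>R h) + (1/2) * u (x + (- t) *\<^sub>R h)"
    using convex_onD[OF cvx, of "1/2" "x + t *\<^sub>R h" "x + (- t) *\<^sub>R h"] inS[of t] inS[of "- t"] t
    by simp
  with t(3,4) show False
    by (simp add: g_def algebra_simps)
qed

lemma local_max_gradient_zero:
  fixes w :: "'a::real_inner \<Rightarrow> real"
  assumes "open S" and "x \<in> S" and "\<forall>y\<in>S. w y \<le> w x"
    and "(w has_derivative (\<lambda>v. Dw \<bullet> v)) (at x)"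
  shows "Dw = 0"
proof -
  have "(\<lambda>v. Dw \<bullet> v) = (\<lambda>v. 0)"
    using differential_zero_maxmin assms by blast
  then have "Dw \<bullet> Dw = 0" by meson
  then show ?thesis by simp
qed

lemma local_max_second_derivative_nonpos:
  fixes w :: "'a::real_inner \<Rightarrow> real"
  assumes "open S" and "x \<in> S" and max: "\<forall>y\<in>S. w y \<le> w x"
    and dw: "\<forall>y\<in>S. (w has_derivative (\<lambda>v. Dw y \<bullet> v)) (at y)"
    and D2: "(Dw has_derivative D2) (at x)"
  shows "D2 h \<bullet> h \<le> 0"
proof (rule ccontr)
  assume pos: "\<not> D2 h \<bullet> h \<le> 0"
  have "Dw x = 0"
    using local_max_gradient_zero[OF assms(1-3)] dw assms(2) by blast
  obtain r where "r > 0" and inS: "\<And>t. \<bar>t\<bar> < r \<Longrightarrow> x + t *\<^sub>R h \<in> S"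
    and d1: "\<And>t. \<bar>t\<bar> < r \<Longrightarrow> ((\<lambda>s. w (x + s *\<^sub>R h)) has_real_derivative Dw (x + t *\<^sub>R h) \<bullet> h) (at t)"
    and d2: "((\<lambda>s. Dw (x + s *\<^sub>R h) \<bullet> h) has_real_derivative D2 h \<bullet> h) (at 0)"
    using derivatives_along_line[OF assms(1,2) dw D2] by blast
  obtain t where "0 < t" "t < r" "w (x + 0 *\<^sub>R h) < w (x + t *\<^sub>R h)"
    using deriv2_pos_imp_both_sides_greater[OF \<open>r > 0\<close> d1 d2] pos \<open>Dw x = 0\<close> by auto
  then show False
    using max inS[of t] by force
qed

lemma second_difference_mean_value:
  fixes u :: "'a::real_inner \<Rightarrow> real"
  assumes du: "\<forall>y\<in>S. (u has_derivative (\<lambda>v. Du y \<bullet> v)) (at y)" and "t > 0"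
    and segments: "\<And>s. 0 \<le> s \<Longrightarrow> s \<le> t \<Longrightarrow> x + s *\<^sub>R h \<in> S \<and> x + t *\<^sub>R k + s *\<^sub>R h \<in> S"
  obtains \<xi> where "0 < \<xi>" and "\<xi> < t"
    and "u (x + t *\<^sub>R h + t *\<^sub>R k) - u (x + t *\<^sub>R h) - u (x + t *\<^sub>R k) + u x
      = t * (Du (x + t *\<^sub>R k + \<xi> *\<^sub>R h) \<bullet> h - Du (x + \<xi> *\<^sub>R h) \<bullet> h)"
proof -
  define \<phi> where "\<phi> s = u (x + t *\<^sub>R k + s *\<^sub>R h) - u (x + s *\<^sub>R h)" for s
  define \<phi>' where "\<phi>' s = Du (x + t *\<^sub>R k + s *\<^sub>R h) \<bullet> h - Du (x + s *\<^sub>R h) \<bullet> h" for s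
  have "(\<phi> has_real_derivative \<phi>' s) (at s)" if "0 \<le> s" "s \<le> t" for s
    unfolding \<phi>_def \<phi>'_def
    using has_real_derivative_along_line[of u _ "x + t *\<^sub>R k" s h]
      has_real_derivative_along_line[of u _ x s h] du segments[OF that]
    by (auto intro!: derivative_eq_intros)
  then obtain \<xi> where "0 < \<xi>" "\<xi> < t" "\<phi> t - \<phi> 0 = (t - 0) * \<phi>' \<xi>"
    using MVT2[of 0 t \<phi> \<phi>'] \<open>t > 0\<close> by auto
  then show ?thesis
    by (intro that[of \<xi>]) (simp_all add: \<phi>_def \<phi>'_def algebra_simps)
qed

lemma second_difference_estimate:
  fixes u :: "'a::real_inner \<Rightarrow> real"
  assumes ball: "\<And>y. norm (y - x) < \<rho> \<Longrightarrow> y \<in> S"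
    and du: "\<forall>y\<in>S. (u has_derivative (\<lambda>v. Du y \<bullet> v)) (at y)"
    and lin: "linear D2"
    and est: "\<And>y. norm (y - x) < \<rho> \<Longrightarrow> norm (Du y - Du x - D2 (y - x)) \<le> \<epsilon> * norm (y - x)"
    and t: "t > 0" "t * (norm h + norm k) < \<rho>" and "\<epsilon> \<ge> 0"
  shows "\<bar>u (x + t *\<^sub>R h + t *\<^sub>R k) - u (x + t *\<^sub>R h) - u (x + t *\<^sub>R k) + u x - t\<^sup>2 * (D2 k \<bullet> h)\<bar>
           \<le> \<epsilon> * t\<^sup>2 * ((2 * norm h + norm k) * norm h)"
proof -
  have near: "norm (x + s *\<^sub>R h - x) \<le> t * norm h"
    "norm (x + t *\<^sub>R k + s *\<^sub>R h - x) \<le> t * (norm h + norm k)"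
    if "0 \<le> s" "s \<le> t" for s
    using that norm_triangle_ineq[of "t *\<^sub>R k" "s *\<^sub>R h"] mult_right_mono[OF that(2) norm_ge_zero[of h]]
    by (auto simp: algebra_simps)
  have "t * norm h \<le> t * (norm h + norm k)"
    using t by (simp add: mult_left_mono)
  then have close: "norm (x + s *\<^sub>R h - x) < \<rho>" "norm (x + t *\<^sub>R k + s *\<^sub>R h - x) < \<rho>"
    if "0 \<le> s" "s \<le> t" for s
    using near[OF that] t(2) by linarith+
  obtain \<xi> where "0 < \<xi>" "\<xi> < t" and \<xi>: "u (x + t *\<^sub>R h + t *\<^sub>R k) - u (x + t *\<^sub>R h) - u (x + t *\<^sub>R k) + u x
      = t * (Du (x + t *\<^sub>R k + \<xi> *\<^sub>R h) \<bullet> h - Du (x + \<xi> *\<^sub>R h) \<bullet> h)"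
    using second_difference_mean_value[OF du \<open>t > 0\<close>] ball close by blast
  then have \<xi>': "0 \<le> \<xi>" "\<xi> \<le> t" by auto
  define y1 where "y1 = x + t *\<^sub>R k + \<xi> *\<^sub>R h"
  define y2 where "y2 = x + \<xi> *\<^sub>R h"
  define e1 where "e1 = Du y1 - Du x - D2 (y1 - x)"
  define e2 where "e2 = Du y2 - Du x - D2 (y2 - x)"
  have "D2 (y1 - x) - D2 (y2 - x) = t *\<^sub>R D2 k"
    by (simp add: y1_def y2_def linear_add[OF lin] linear_cmul[OF lin])
  then have "Du y1 \<bullet> h - Du y2 \<bullet> h - t * (D2 k \<bullet> h) = (e1 - e2) \<bullet> h"
    by (simp add: e1_def e2_def inner_diff_left algebra_simps)
  also have "\<bar>\<dots>\<bar> \<le> (norm e1 + norm e2) * norm h"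
    by (metis Cauchy_Schwarz_ineq2 mult_right_mono norm_ge_zero norm_triangle_ineq4 order_trans)
  also have "\<dots> \<le> (\<epsilon> * (t * (norm h + norm k)) + \<epsilon> * (t * norm h)) * norm h"
  proof -
    have "norm e1 \<le> \<epsilon> * norm (y1 - x)" "norm e2 \<le> \<epsilon> * norm (y2 - x)"
      unfolding e1_def e2_def y1_def y2_def
      by (rule est[OF close(2)[OF \<xi>']], rule est[OF close(1)[OF \<xi>']])
    moreover have "\<epsilon> * norm (y1 - x) \<le> \<epsilon> * (t * (norm h + norm k))"
      "\<epsilon> * norm (y2 - x) \<le> \<epsilon> * (t * norm h)"
      unfolding y1_def y2_def using near[OF \<xi>'] \<open>\<epsilon> \<ge> 0\<close> by (simp_all add: mult_left_mono)
    ultimately show ?thesis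
      by (intro mult_right_mono) auto
  qed
  finally have "\<bar>Du y1 \<bullet> h - Du y2 \<bullet> h - t * (D2 k \<bullet> h)\<bar> \<le> \<epsilon> * t * ((2 * norm h + norm k) * norm h)"
    by (simp add: algebra_simps)
  with t(1) show ?thesis
    unfolding \<xi> y1_def[symmetric] y2_def[symmetric]
    by (simp add: abs_mult power2_eq_square mult_left_mono mult.assoc right_diff_distrib[symmetric])
qed

text \<open>The second difference of \<open>u\<close> at \<open>x\<close> with steps \<open>t h\<close> and \<open>t k\<close> approximates both
  \<open>t\<^sup>2 (D2 k \<bullet> h)\<close> and \<open>t\<^sup>2 (D2 h \<bullet> k)\<close>.\<close>
lemma second_derivative_asymmetry_le:
  fixes u :: "'a::real_inner \<Rightarrow> real"
  assumes "open S" and "x \<in> S" and du: "\<forall>y\<in>S. (u has_derivative (\<lambda>v. Du y \<bullet> v)) (at y)"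
    and D2: "(Du has_derivative D2) (at x)" and "\<eta> > 0"
  shows "\<bar>D2 k \<bullet> h - D2 h \<bullet> k\<bar> \<le> \<eta> * ((2 * norm h + norm k) * norm h + (2 * norm k + norm h) * norm k)"
proof -
  have lin: "linear D2"
    using D2 has_derivative_linear by blast
  obtain e where "e > 0" "ball x e \<subseteq> S"
    using assms(1,2) open_contains_ball by blast
  obtain \<delta> where "\<delta> > 0"
    and \<delta>: "\<And>y. norm (y - x) < \<delta> \<Longrightarrow> norm (Du y - Du x - D2 (y - x)) \<le> \<eta> * norm (y - x)"
    using D2 \<open>\<eta> > 0\<close> unfolding has_derivative_at_alt by blast
  define \<rho> where "\<rho> = min e \<delta>"
  have "\<rho> > 0"
    using \<open>e > 0\<close> \<open>\<delta> > 0\<close> by (simp add: \<rho>_def)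
  have ball: "\<And>y. norm (y - x) < \<rho> \<Longrightarrow> y \<in> S"
    using \<open>ball x e \<subseteq> S\<close> by (auto simp: \<rho>_def dist_norm norm_minus_commute)
  have est: "\<And>y. norm (y - x) < \<rho> \<Longrightarrow> norm (Du y - Du x - D2 (y - x)) \<le> \<eta> * norm (y - x)"
    using \<delta> by (simp add: \<rho>_def)
  define t where "t = \<rho> / (norm h + norm k + 1)"
  have "norm h + norm k + 1 > 0"
    by (simp add: add_nonneg_pos)
  with \<open>\<rho> > 0\<close> have "t > 0"
    by (simp add: t_def)
  then have "t * (norm h + norm k) < t * (norm h + norm k + 1)"
    by simp
  also have "\<dots> = \<rho>"
    using \<open>norm h + norm k + 1 > 0\<close> by (simp add: t_def)
  finally have "t * (norm h + norm k) < \<rho>" "t * (norm k + norm h) < \<rho>"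
    by (simp_all add: add.commute)
  define \<Delta> where "\<Delta> = u (x + t *\<^sub>R h + t *\<^sub>R k) - u (x + t *\<^sub>R h) - u (x + t *\<^sub>R k) + u x"
  have "t\<^sup>2 * (D2 k \<bullet> h - D2 h \<bullet> k) = (\<Delta> - t\<^sup>2 * (D2 h \<bullet> k)) - (\<Delta> - t\<^sup>2 * (D2 k \<bullet> h))"
    by (simp add: algebra_simps)
  then have "t\<^sup>2 * \<bar>D2 k \<bullet> h - D2 h \<bullet> k\<bar> = \<bar>(\<Delta> - t\<^sup>2 * (D2 h \<bullet> k)) - (\<Delta> - t\<^sup>2 * (D2 k \<bullet> h))\<bar>"
    by (metis abs_mult abs_of_nonneg zero_le_power2)
  also have "\<dots> \<le> \<bar>\<Delta> - t\<^sup>2 * (D2 h \<bullet> k)\<bar> + \<bar>\<Delta> - t\<^sup>2 * (D2 k \<bullet> h)\<bar>"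
    by (rule abs_triangle_ineq4)
  also have "\<dots> \<le> \<eta> * t\<^sup>2 * ((2 * norm k + norm h) * norm k) + \<eta> * t\<^sup>2 * ((2 * norm h + norm k) * norm h)"
    using second_difference_estimate[OF ball du lin est \<open>t > 0\<close> \<open>t * (norm k + norm h) < \<rho>\<close>]
      second_difference_estimate[OF ball du lin est \<open>t > 0\<close> \<open>t * (norm h + norm k) < \<rho>\<close>] \<open>\<eta> > 0\<close>
    unfolding \<Delta>_def by (simp add: algebra_simps)
  also have "\<dots> = t\<^sup>2 * (\<eta> * ((2 * norm h + norm k) * norm h + (2 * norm k + norm h) * norm k))"
    by (simp add: algebra_simps)
  finally show ?thesis
    using \<open>t > 0\<close> by simp
qed

lemma second_derivative_symmetric_inner:
  fixes u :: "'a::real_inner \<Rightarrow> real"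
  assumes "open S" and "x \<in> S" and "\<forall>y\<in>S. (u has_derivative (\<lambda>v. Du y \<bullet> v)) (at y)"
    and "(Du has_derivative D2) (at x)"
  shows "D2 k \<bullet> h = D2 h \<bullet> k"
proof -
  define C where "C = (2 * norm h + norm k) * norm h + (2 * norm k + norm h) * norm k"
  have "\<bar>D2 k \<bullet> h - D2 h \<bullet> k\<bar> \<le> 0 + \<epsilon>" if "\<epsilon> > 0" for \<epsilon>
  proof -
    have "C \<ge> 0" by (simp add: C_def)
    with that have "\<epsilon> / (C + 1) > 0" by simp
    then have "\<bar>D2 k \<bullet> h - D2 h \<bullet> k\<bar> \<le> \<epsilon> / (C + 1) * C"
      unfolding C_def by (rule second_derivative_asymmetry_le[OF assms])
    also have "\<dots> \<le> \<epsilon>"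
      using that \<open>C \<ge> 0\<close> by (simp add: field_simps)
    finally show ?thesis by simp
  qed
  then have "\<bar>D2 k \<bullet> h - D2 h \<bullet> k\<bar> \<le> 0"
    by (rule field_le_epsilon)
  then show ?thesis by simp
qed

lemma hessian_matrix_symmetric:
  fixes u :: "real^'n \<Rightarrow> real"
  assumes "open S" and "x \<in> S" and "\<forall>y\<in>S. (u has_derivative (\<lambda>v. Du y \<bullet> v)) (at y)"
    and "(Du has_derivative (\<lambda>v. H *v v)) (at x)"
  shows "transpose H = H"
proof -
  have "(H *v axis j 1) \<bullet> axis i 1 = (H *v axis i 1) \<bullet> axis j 1" for i j
    by (rule second_derivative_symmetric_inner[OF assms])
  then show ?thesis
    by (simp add: vec_eq_iff transpose_def inner_axis matrix_vector_mult_basis column_def)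
qed

section \<open>The comparison principle\<close>

lemma exists_interior_max:
  fixes f :: "'a::heine_borel \<Rightarrow> real"
  assumes "bounded \<Omega>" and "continuous_on (closure \<Omega>) f" and "x \<in> \<Omega>"
    and "\<forall>z\<in>frontier \<Omega>. f z < f x"
  obtains y where "y \<in> \<Omega>" and "f x \<le> f y" and "\<forall>z\<in>\<Omega>. f z \<le> f y"
proof -
  have "compact (closure \<Omega>)"
    using assms(1) by (simp add: compact_eq_bounded_closed bounded_closure)
  then obtain y where y: "y \<in> closure \<Omega>" "\<forall>z\<in>closure \<Omega>. f z \<le> f y"
    using continuous_attains_sup[OF _ _ assms(2)] assms(3) by auto
  then have "f x \<le> f y"
    using assms(3) closure_subset by blast
  then have "y \<notin> frontier \<Omega>"
    using assms(4) by force
  then have "y \<in> \<Omega>"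
    using y(1) interior_subset by (auto simp: frontier_def)
  then show ?thesis
    using that \<open>f x \<le> f y\<close> y(2) closure_subset by blast
qed

lemma det_hessian_le_at_max_of_difference:
  fixes u v :: "real^'n \<Rightarrow> real"
  assumes "open \<Omega>" and u: "C2_with \<Omega> u Du Hu" and v: "C2_with \<Omega> v Dv Hv"
    and "convex_on \<Omega> u" and "y \<in> \<Omega>" and max: "\<forall>z\<in>\<Omega>. u z - v z \<le> u y - v y"
  shows "Du y = Dv y" and "det (Hu y) \<le> det (Hv y)"
proof -
  have du: "\<forall>z\<in>\<Omega>. (u has_derivative (\<lambda>h. Du z \<bullet> h)) (at z)"
    and hu: "(Du has_derivative (\<lambda>h. Hu y *v h)) (at y)"
    using u \<open>y \<in> \<Omega>\<close> by (auto simp: C2_with_def)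
  have dv: "\<forall>z\<in>\<Omega>. (v has_derivative (\<lambda>h. Dv z \<bullet> h)) (at z)"
    and hv: "(Dv has_derivative (\<lambda>h. Hv y *v h)) (at y)"
    using v \<open>y \<in> \<Omega>\<close> by (auto simp: C2_with_def)
  have dw: "\<forall>z\<in>\<Omega>. ((\<lambda>z. u z - v z) has_derivative (\<lambda>h. (Du z - Dv z) \<bullet> h)) (at z)"
    using du dv by (auto intro!: derivative_eq_intros simp: inner_diff_left)
  have hw: "((\<lambda>z. Du z - Dv z) has_derivative (\<lambda>h. (Hu y - Hv y) *v h)) (at y)"
    using hu hv by (auto intro!: derivative_eq_intros simp: matrix_vector_mult_diff_rdistrib)
  have "Du y - Dv y = 0"
    using local_max_gradient_zero[OF \<open>open \<Omega>\<close> \<open>y \<in> \<Omega>\<close> max] dw \<open>y \<in> \<Omega>\<close> by blast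
  then show "Du y = Dv y" by simp
  show "det (Hu y) \<le> det (Hv y)"
  proof (rule det_mono_loewner)
    show "transpose (Hu y) = Hu y"
      using hessian_matrix_symmetric[OF \<open>open \<Omega>\<close> \<open>y \<in> \<Omega>\<close> du hu] .
    show "transpose (Hv y) = Hv y"
      using hessian_matrix_symmetric[OF \<open>open \<Omega>\<close> \<open>y \<in> \<Omega>\<close> dv hv] .
    show "0 \<le> h \<bullet> (Hu y *v h)" for h
      using convex_on_second_derivative_nonneg[OF \<open>open \<Omega>\<close> \<open>y \<in> \<Omega>\<close> \<open>convex_on \<Omega> u\<close> du hu]
      by (simp add: inner_commute)
    show "h \<bullet> (Hu y *v h) \<le> h \<bullet> (Hv y *v h)" for h
      using local_max_second_derivative_nonpos[OF \<open>open \<Omega>\<close> \<open>y \<in> \<Omega>\<close> max dw hw, of h]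
      by (simp add: inner_commute matrix_vector_mult_diff_rdistrib inner_diff_right)
  qed
qed

lemma convex_nonpos_if_det_hessian_pos:
  fixes u :: "real^'n \<Rightarrow> real"
  assumes "open \<Omega>" and "bounded \<Omega>" and u: "C2_with \<Omega> u Du Hu"
    and "continuous_on (closure \<Omega>) u" and "convex_on \<Omega> u"
    and "\<forall>z\<in>frontier \<Omega>. u z \<le> 0" and det: "\<forall>z\<in>\<Omega>. det (Hu z) > 0" and "x \<in> \<Omega>"
  shows "u x \<le> 0"
proof (rule ccontr)
  assume "\<not> u x \<le> 0"
  then have "\<forall>z\<in>frontier \<Omega>. u z < u x"
    using assms(6) by fastforce
  then obtain y where "y \<in> \<Omega>" and "\<forall>z\<in>\<Omega>. u z \<le> u y"
    using exists_interior_max[OF assms(2,4,8)] by blast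
  then have max: "\<forall>z\<in>\<Omega>. u z - 0 \<le> u y - 0" by simp
  have "C2_with \<Omega> (\<lambda>_. 0) (\<lambda>_. 0) (\<lambda>_. mat 0)"
    by (simp add: C2_with_def)
  then have "det (Hu y) \<le> det (mat 0 :: real^'n^'n)"
    by (rule det_hessian_le_at_max_of_difference(2)[OF \<open>open \<Omega>\<close> u _ \<open>convex_on \<Omega> u\<close> \<open>y \<in> \<Omega>\<close> max])
  then have "det (Hu y) \<le> 0"
    by (simp only: det_0)
  moreover have "det (Hu y) > 0"
    using det \<open>y \<in> \<Omega>\<close> by blast
  ultimately show False
    by linarith
qed

lemma comparison_principle:
  fixes u v :: "real^'n \<Rightarrow> real"
  assumes "open \<Omega>" and "bounded \<Omega>"
    and u: "C2_with \<Omega> u Du Hu" and v: "C2_with \<Omega> v Dv Hv"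
    and "continuous_on (closure \<Omega>) u" and "continuous_on (closure \<Omega>) v" and "convex_on \<Omega> u"
    and boundary: "\<forall>z\<in>frontier \<Omega>. v z \<le> 0 \<and> u z \<le> v z"
    and det: "\<forall>z\<in>\<Omega>. det (Hu z) > 0"
    and strict: "\<forall>z\<in>\<Omega>. Du z = Dv z \<longrightarrow> v z < u z \<longrightarrow> u z \<le> 0 \<longrightarrow> det (Hv z) < det (Hu z)"
    and "x \<in> \<Omega>"
  shows "u x \<le> v x"
proof (rule ccontr)
  assume "\<not> u x \<le> v x"
  then have "\<forall>z\<in>frontier \<Omega>. u z - v z < u x - v x"
    using boundary by fastforce
  moreover have "continuous_on (closure \<Omega>) (\<lambda>z. u z - v z)"
    using assms(5,6) by (rule continuous_on_diff)
  ultimately obtain y where "y \<in> \<Omega>" and "u x - v x \<le> u y - v y"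
    and max: "\<forall>z\<in>\<Omega>. u z - v z \<le> u y - v y"
    using exists_interior_max[OF \<open>bounded \<Omega>\<close> _ \<open>x \<in> \<Omega>\<close>] by blast
  have "Du y = Dv y" and "det (Hu y) \<le> det (Hv y)"
    using det_hessian_le_at_max_of_difference[OF \<open>open \<Omega>\<close> u v \<open>convex_on \<Omega> u\<close> \<open>y \<in> \<Omega>\<close> max]
    by auto
  moreover have "u y \<le> 0"
  proof (rule convex_nonpos_if_det_hessian_pos[OF assms(1,2) u assms(5,7) _ det \<open>y \<in> \<Omega>\<close>])
    show "\<forall>z\<in>frontier \<Omega>. u z \<le> 0"
      using boundary by fastforce
  qed
  moreover have "v y < u y"
    using \<open>\<not> u x \<le> v x\<close> \<open>u x - v x \<le> u y - v y\<close> by linarith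
  ultimately have "det (Hv y) < det (Hu y)" "det (Hu y) \<le> det (Hv y)"
    using strict \<open>y \<in> \<Omega>\<close> by blast+
  then show False by linarith
qed

lemma negpow_times_le_ereal:
  assumes "c > 0" and "negpow t p * ereal c \<le> ereal d"
  shows "t \<noteq> 0" and "\<bar>t\<bar> powr - p * c \<le> d"
  using assms by (auto simp: negpow_def split: if_splits)

lemma ereal_le_negpow_times:
  assumes "t \<noteq> 0" and "ereal d \<le> negpow t p * ereal c"
  shows "d \<le> \<bar>t\<bar> powr - p * c"
  using assms by (simp add: negpow_def)

lemma comparison_negpow_weighted:
  fixes u v a b :: "real^'n \<Rightarrow> real"
  assumes "open \<Omega>" and "bounded \<Omega>" and "p > 0"
    and "C2_with \<Omega> u Du Hu" and "C2_with \<Omega> v Dv Hv"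
    and "continuous_on (closure \<Omega>) u" and "continuous_on (closure \<Omega>) v" and "convex_on \<Omega> u"
    and pos: "\<forall>x\<in>\<Omega>. 0 < a x \<and> 0 < b x"
    and weights: "\<forall>x\<in>\<Omega>. Du x = Dv x \<longrightarrow> v x < u x \<longrightarrow> b x \<le> a x"
    and sub: "\<forall>x\<in>\<Omega>. negpow (u x) p * ereal (a x) \<le> ereal (det (Hu x))"
    and super: "\<forall>x\<in>\<Omega>. ereal (det (Hv x)) \<le> negpow (v x) p * ereal (b x)"
    and boundary: "\<forall>x\<in>frontier \<Omega>. v x \<le> 0 \<and> u x \<le> v x"
  shows "\<forall>x\<in>\<Omega>. u x \<le> v x"
proof
  have u: "u z \<noteq> 0" "\<bar>u z\<bar> powr - p * a z \<le> det (Hu z)" if "z \<in> \<Omega>" for z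
    using negpow_times_le_ereal[of "a z" "u z" p] pos sub that by auto
  fix x assume "x \<in> \<Omega>"
  show "u x \<le> v x"
  proof (rule comparison_principle[OF assms(1,2,4-8) boundary _ _ \<open>x \<in> \<Omega>\<close>])
    show "\<forall>z\<in>\<Omega>. det (Hu z) > 0"
    proof
      fix z assume "z \<in> \<Omega>"
      then have "0 < \<bar>u z\<bar> powr - p * a z"
        using u(1) pos by simp
      with u(2)[OF \<open>z \<in> \<Omega>\<close>] show "det (Hu z) > 0" by linarith
    qed
    show "\<forall>z\<in>\<Omega>. Du z = Dv z \<longrightarrow> v z < u z \<longrightarrow> u z \<le> 0 \<longrightarrow> det (Hv z) < det (Hu z)"
    proof (intro ballI impI)
      fix z assume "z \<in> \<Omega>" "Du z = Dv z" "v z < u z" "u z \<le> 0"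
      then have "u z < 0"
        using u(1) by (simp add: less_le)
      have "det (Hv z) \<le> \<bar>v z\<bar> powr - p * b z"
        using ereal_le_negpow_times[of "v z" "det (Hv z)" p "b z"] super \<open>z \<in> \<Omega>\<close>
          \<open>v z < u z\<close> \<open>u z < 0\<close> by simp
      also have "\<dots> < \<bar>u z\<bar> powr - p * b z"
        using powr_less_mono2_neg[of "- p" "\<bar>u z\<bar>" "\<bar>v z\<bar>"] \<open>p > 0\<close> \<open>v z < u z\<close> \<open>u z < 0\<close>
          pos \<open>z \<in> \<Omega>\<close> by simp
      also have "\<dots> \<le> \<bar>u z\<bar> powr - p * a z"
        using weights \<open>z \<in> \<Omega>\<close> \<open>Du z = Dv z\<close> \<open>v z < u z\<close> by (simp add: mult_left_mono)
      also have "\<dots> \<le> det (Hu z)"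
        using u(2) \<open>z \<in> \<Omega>\<close> .
      finally show "det (Hv z) < det (Hu z)" .
    qed
  qed
qed

theorem lemma2p1:
  fixes \<Omega> :: "(real^'n) set" and p :: real
  assumes "open \<Omega>" and "connected \<Omega>" and "\<Omega> \<noteq> {}" and "convex \<Omega>" and "bounded \<Omega>"
    and "p > 0"
  shows
   "(\<forall>(u :: real^'n \<Rightarrow> real) v Du Dv Hu Hv.
        C2_with \<Omega> u Du Hu \<and> C2_with \<Omega> v Dv Hv
      \<and> continuous_on (closure \<Omega>) u \<and> continuous_on (closure \<Omega>) v
      \<and> convex_on \<Omega> u \<and> convex_on \<Omega> v
      \<and> (\<forall>x\<in>\<Omega>. ereal (det (Hu x)) \<ge> negpow (u x) p)
      \<and> (\<forall>x\<in>\<Omega>. ereal (det (Hv x)) \<le> negpow (v x) p)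
      \<and> (\<forall>x\<in>frontier \<Omega>. 0 \<ge> v x \<and> v x \<ge> u x)
      \<longrightarrow> (\<forall>x\<in>\<Omega>. v x \<ge> u x))
  \<and> (\<forall>k::real. k > 0 \<longrightarrow>
      (\<forall>(u :: real^'n \<Rightarrow> real) v Du Dv Hu Hv.
        C2_with \<Omega> u Du Hu \<and> C2_with \<Omega> v Dv Hv
      \<and> continuous_on (closure \<Omega>) u \<and> continuous_on (closure \<Omega>) v
      \<and> convex_on \<Omega> u \<and> convex_on \<Omega> v
      \<and> (\<forall>x\<in>\<Omega>. x \<bullet> Du x - u x > 0) \<and> (\<forall>x\<in>\<Omega>. x \<bullet> Dv x - v x > 0)
      \<and> (\<forall>x\<in>\<Omega>. ereal (det (Hu x)) \<ge> negpow (u x) p * ereal ((x \<bullet> Du x - u x) powr (- k)))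
      \<and> (\<forall>x\<in>\<Omega>. ereal (det (Hv x)) \<le> negpow (v x) p * ereal ((x \<bullet> Dv x - v x) powr (- k)))
      \<and> (\<forall>x\<in>frontier \<Omega>. 0 \<ge> v x \<and> v x \<ge> u x)
      \<longrightarrow> (\<forall>x\<in>\<Omega>. v x \<ge> u x)))"
  apply (intro conjI allI impI; elim conjE)
  subgoal for u v Du Dv Hu Hv
    by (rule comparison_negpow_weighted[OF assms(1,5,6), of u Du Hu v Dv Hv "\<lambda>_. 1" "\<lambda>_. 1"])
      simp_all
  subgoal for k u v Du Dv Hu Hv
    by (rule comparison_negpow_weighted[OF assms(1,5,6), of u Du Hu v Dv Hv
          "\<lambda>x. (x \<bullet> Du x - u x) powr - k" "\<lambda>x. (x \<bullet> Dv x - v x) powr - k"])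
      (auto intro!: powr_mono2' elim!: ballE)
  done

end
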